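(* Let $B$ be an $A$-algebra which is an integral domain, and let $f:A\to B$ be an additive group homomorphism. Then for every positive integer $d$ and every $c\in A(d)$, $$M_d(f)(z+c)-M_d(f)(z)=M_d(1)\,f(c)\quad\text{in } B[z].$$
   Context: $q$ is a power of a prime, $A=\mathbb{F}_q[\theta]$, $A_+(d)$ is the set of monic polynomials in $A$ of degree $d$, and for $d\ge1$, $A(d)$ is the $\mathbb{F}_q$-vector space of polynomials in $A$ of degree $<d$. For a function $f:A\to B$ and $d\ge0$, the Carlitz approximation is $M_d(f)(z):=\sum_{b\in A_+(d)} f(b)\prod_{a\in A_+(d)\setminus\{b\}}(z-a)\in B[z]$. $M_d(1)$ denotes $M_d$ applied to the constant function $1$; it is a constant (equal to the image of $(-1)^dD_d/L_d$, where $D_d$ is the product of all monic polynomials of degree $d$ and $L_d$ the least common multiple of all polynomials of degree $d$). *)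

theory Defs
  imports "HOL-Computational_Algebra.Polynomial"
begin

text \<open>A = F_q[theta] is rendered as the type 'k poly for a finite field 'k.
  A_+(d): monic polynomials of degree d.\<close>
definition monics :: "nat \<Rightarrow> 'k::{field,finite} poly set" where
  "monics d = {p. lead_coeff p = 1 \<and> degree p = d}"

text \<open>Carlitz approximation M_d(f) in B[z]; the A-algebra structure of B is the
  ring homomorphism phi, through which elements a of A are viewed in B.\<close>
definition carlitz_approx ::
  "('k::{field,finite} poly \<Rightarrow> 'b::comm_ring_1) \<Rightarrow> ('k poly \<Rightarrow> 'b) \<Rightarrow> nat \<Rightarrow> 'b poly" where
  "carlitz_approx phi f d =
     (\<Sum>b\<in>monics d. smult (f b) (\<Prod>a\<in>monics d - {b}. [:- phi a, 1:]))"

end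

theory Submission
  imports Defs
begin

text \<open>Translation by c, of degree less than d, permutes the monic polynomials of degree d.
  Substituting z + c into M_d(f) therefore only permutes the nodes a of the interpolation
  products and turns M_d(f) into M_d(f(\<cdot> + c)); additivity of f then splits off f(c) M_d(1).\<close>

lemma monics_add_lower_degree:
  fixes c :: "'k::{field,finite} poly"
  assumes "a \<in> monics d" "degree c < d"
  shows "a + c \<in> monics d"
proof -
  have "degree c < degree a" using assms by (simp add: monics_def)
  then show ?thesis using assms
    by (auto simp add: monics_def degree_add_eq_left coeff_eq_0)
qed

lemma bij_betw_add_monics:
  fixes c :: "'k::{field,finite} poly"
  assumes "degree c < d"
  shows "bij_betw (\<lambda>a. a + c) (monics d) (monics d)"
proof (rule bij_betw_byWitness[where f'="\<lambda>a. a - c"])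
  show "(\<lambda>a. a + c) ` monics d \<subseteq> monics d"
    using monics_add_lower_degree[OF _ assms] by auto
  show "(\<lambda>a. a - c) ` monics d \<subseteq> monics d"
    using monics_add_lower_degree[of _ d "- c"] assms by auto
qed simp_all

lemma sum_prod_remove_reindex:
  assumes "bij_betw h S S"
  shows "(\<Sum>b\<in>S. F b (\<Prod>a\<in>S - {b}. G a)) = (\<Sum>b\<in>S. F (h b) (\<Prod>a\<in>S - {b}. G (h a)))"
proof -
  have "(\<Prod>a\<in>S - {h b}. G a) = (\<Prod>a\<in>S - {b}. G (h a))" if "b \<in> S" for b
  proof -
    have "bij_betw h (S - {b}) (S - {h b})"
      using assms that by (intro bij_betw_DiffI) (auto simp: bij_betw_def)
    then show ?thesis by (rule prod.reindex_bij_betw[symmetric])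
  qed
  then have "(\<Sum>b\<in>S. F (h b) (\<Prod>a\<in>S - {h b}. G a)) = (\<Sum>b\<in>S. F (h b) (\<Prod>a\<in>S - {b}. G (h a)))"
    by (intro sum.cong) simp_all
  moreover have "(\<Sum>b\<in>S. F b (\<Prod>a\<in>S - {b}. G a)) = (\<Sum>b\<in>S. F (h b) (\<Prod>a\<in>S - {h b}. G a))"
    using sum.reindex_bij_betw[OF assms, of "\<lambda>b. F b (\<Prod>a\<in>S - {b}. G a)"] by simp
  ultimately show ?thesis by simp
qed

lemma carlitz_approx_add:
  "carlitz_approx phi (\<lambda>b. f b + g b) d = carlitz_approx phi f d + carlitz_approx phi g d"
  by (simp add: carlitz_approx_def smult_add_left sum.distrib)

lemma smult_sum_right: "smult k (\<Sum>i\<in>S. p i) = (\<Sum>i\<in>S. smult k (p i))"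
  by (induction S rule: infinite_finite_induct) (simp_all add: smult_add_right)

lemma carlitz_approx_const:
  "carlitz_approx phi (\<lambda>_. k) d = carlitz_approx phi (\<lambda>_. 1) d * [:k:]"
  by (simp add: carlitz_approx_def smult_sum_right mult.commute)

lemma carlitz_approx_pcompose_shift:
  fixes phi :: "'k::{field,finite} poly \<Rightarrow> 'b::comm_ring_1"
  assumes phi_add: "\<And>x y. phi (x + y) = phi x + phi y"
    and c_deg: "degree c < d"
  shows "pcompose (carlitz_approx phi f d) [:phi c, 1:] = carlitz_approx phi (\<lambda>b. f (b + c)) d"
proof -
  have phi_diff: "phi c - phi a = - phi (a - c)" for a
    using phi_add[of "a - c" c] by simp
  have "pcompose (carlitz_approx phi f d) [:phi c, 1:]
      = (\<Sum>b\<in>monics d. smult (f b) (\<Prod>a\<in>monics d - {b}. [:- phi (a - c), 1:]))"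
    by (simp add: carlitz_approx_def pcompose_sum pcompose_smult pcompose_prod
        pcompose_pCons phi_diff)
  also have "\<dots> = carlitz_approx phi (\<lambda>b. f (b + c)) d"
    unfolding carlitz_approx_def
    using sum_prod_remove_reindex[OF bij_betw_add_monics[OF c_deg],
        of "\<lambda>b. smult (f b)" "\<lambda>a. [:- phi (a - c), 1:]"]
    by simp
  finally show ?thesis .
qed

theorem theorem4p1p9:
  fixes phi :: "'k::{field,finite} poly \<Rightarrow> 'b::idom"
    and f :: "'k poly \<Rightarrow> 'b"
    and d :: nat and c :: "'k poly"
  assumes phi_one: "phi 1 = 1"
    and phi_add: "\<And>x y. phi (x + y) = phi x + phi y"
    and phi_mult: "\<And>x y. phi (x * y) = phi x * phi y"
    and f_add: "\<And>x y. f (x + y) = f x + f y"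
    and d_pos: "d \<ge> 1"
    and c_deg: "degree c < d"
  shows "pcompose (carlitz_approx phi f d) [:phi c, 1:] - carlitz_approx phi f d
           = carlitz_approx phi (\<lambda>_. 1) d * [:f c:]"
proof -
  have "pcompose (carlitz_approx phi f d) [:phi c, 1:]
      = carlitz_approx phi (\<lambda>b. f b + f c) d"
    using carlitz_approx_pcompose_shift[OF phi_add c_deg] by (simp add: f_add)
  also have "\<dots> = carlitz_approx phi f d + carlitz_approx phi (\<lambda>_. 1) d * [:f c:]"
    by (simp add: carlitz_approx_add carlitz_approx_const[of phi "f c"])
  finally show ?thesis by simp
qed

end
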